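(* Let $\mathcal{S},\mathcal{A}$ be finite nonempty sets, $\lambda\in(0,1)$, $b>0$, $r_{sa}\in\mathbb{R}$, let $\bm{\nu}$ satisfy $\bm{\nu}_s\in\Delta(\mathcal{A})$ for each $s\in\mathcal{S}$, and for each $(s,a)$ let $\mathcal{U}_{sa}\subseteq\Delta(\mathcal{S})$ be a nonempty set over which the minima below are attained. For $\bm{x}\in(\mathbb{R}_{>0})^{\mathcal{S}}$ define $$\tilde t(\bm{x})_s=\sum_{a\in\mathcal{A}}\nu_{sa}\exp(b\,r_{sa})\min_{\bm{p}\in\mathcal{U}_{sa}}\prod_{s'\in\mathcal{S}}x_{s'}^{\lambda p_{s'}}.$$ Then for each $s\in\mathcal{S}$ the function $\bm{x}\mapsto\tilde t(\bm{x})_s$ is concave on $(\mathbb{R}_{>0})^{\mathcal{S}}$.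
   Context: $\Delta(\mathcal{X})$ denotes the probability simplex over a finite set $\mathcal{X}$. *)

theory Defs
  imports "HOL-Analysis.Analysis"
begin

definition prob_simplex :: "('x::finite \<Rightarrow> real) set" where
  "prob_simplex = {p. (\<forall>i. 0 \<le> p i) \<and> (\<Sum>i\<in>UNIV. p i) = 1}"

text \<open>The map t-tilde, component s. The minimum over U s a is written as an
infimum; the theorem assumes it is attained, so it is a minimum.\<close>
definition t_tilde ::
  "real \<Rightarrow> real \<Rightarrow> ('s::finite \<Rightarrow> 'a::finite \<Rightarrow> real) \<Rightarrow> ('s \<Rightarrow> 'a \<Rightarrow> real)
   \<Rightarrow> ('s \<Rightarrow> 'a \<Rightarrow> ('s \<Rightarrow> real) set) \<Rightarrow> real^'s \<Rightarrow> 's \<Rightarrow> real" where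
  "t_tilde lam b r \<nu> U x s =
     (\<Sum>a\<in>UNIV. \<nu> s a * exp (b * r s a) *
        Inf ((\<lambda>p. \<Prod>s'\<in>UNIV. (x $ s') powr (lam * p s')) ` U s a))"

end

theory Submission
  imports Defs
begin

(* For fixed p in the simplex, x \<mapsto> \<Prod>i. x i powr (lam * p i) is a weighted geometric
   mean of total weight lam \<le> 1, hence concave on the positive orthant: dividing by its value
   at z = u x + v y turns concavity into the weighted AM-GM inequality
   \<Prod>i. a i powr w i \<le> (\<Sum>i. w i * a i) + (1 - \<Sum>i. w i) for a = x/z and a = y/z.
   Pointwise minima (when attained) and nonnegative combinations of concave functions are
   concave, and t_tilde is a nonnegative combination of such minima. *)

lemma convex_strictly_positive_orthant_cart: "convex {x::real^'n. \<forall>i. 0 < x $ i}"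
  by (rule convex_box_cart) (simp flip: greaterThan_def)

lemma prod_powr_le_weighted_sum:
  fixes w a :: "'i \<Rightarrow> real"
  assumes "finite I" and w: "\<And>i. i \<in> I \<Longrightarrow> 0 \<le> w i" and W: "sum w I \<le> 1"
    and a: "\<And>i. i \<in> I \<Longrightarrow> 0 < a i"
  shows "(\<Prod>i\<in>I. a i powr w i) \<le> (\<Sum>i\<in>I. w i * a i) + (1 - sum w I)"
proof -
  \<comment> \<open>Jensen for ln, with the missing weight 1 - sum w I placed on the extra point 1\<close>
  define c where "c = case_option (1 - sum w I) w"
  define y where "y = case_option 1 a"
  let ?J = "insert None (Some ` I)"
  have sum_J: "(\<Sum>j\<in>?J. f j) = f None + (\<Sum>i\<in>I. f (Some i))" for f :: "'i option \<Rightarrow> real"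
    using \<open>finite I\<close> by (simp add: sum.reindex)
  have J: "finite ?J" "(\<Sum>j\<in>?J. c j) = 1" "\<And>j. j \<in> ?J \<Longrightarrow> 0 \<le> c j" "\<And>j. j \<in> ?J \<Longrightarrow> y j \<in> {0<..}"
    using \<open>finite I\<close> w W a by (auto simp: c_def y_def sum_J)
  have M: "(\<Sum>j\<in>?J. c j *\<^sub>R y j) = (\<Sum>i\<in>I. w i * a i) + (1 - sum w I)"
    by (simp add: sum_J c_def y_def)
  have "ln (\<Prod>i\<in>I. a i powr w i) = (\<Sum>j\<in>?J. c j * ln (y j))"
    using \<open>finite I\<close> a by (subst ln_prod) (force simp: sum_J c_def y_def)+
  also have "\<dots> \<le> ln (\<Sum>j\<in>?J. c j *\<^sub>R y j)"
    using J by (intro concave_on_sum[OF _ _ ln_concave]) auto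
  finally have "ln (\<Prod>i\<in>I. a i powr w i) \<le> ln ((\<Sum>i\<in>I. w i * a i) + (1 - sum w I))"
    by (simp only: M)
  moreover have "(\<Sum>j\<in>?J. c j *\<^sub>R y j) \<in> {0<..}"
    using J by (intro convex_sum) auto
  then have "(\<Sum>i\<in>I. w i * a i) + (1 - sum w I) > 0"
    by (simp only: M greaterThan_iff)
  moreover have "(\<Prod>i\<in>I. a i powr w i) > 0"
    using a by (intro prod_pos) force
  ultimately show ?thesis
    by simp
qed

lemma concave_on_prod_powr_cart:
  fixes w :: "'n::finite \<Rightarrow> real"
  assumes w: "\<And>i. 0 \<le> w i" and W: "sum w UNIV \<le> 1"
  shows "concave_on {x::real^'n. \<forall>i. 0 < x $ i} (\<lambda>x. \<Prod>i\<in>UNIV. (x $ i) powr w i)"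
proof -
  let ?O = "{x::real^'n. \<forall>i. 0 < x $ i}"
  let ?g = "\<lambda>x::real^'n. \<Prod>i\<in>UNIV. (x $ i) powr w i"
  have "u * ?g x + v * ?g y \<le> ?g (u *\<^sub>R x + v *\<^sub>R y)"
    if x: "x \<in> ?O" and y: "y \<in> ?O" and uv: "0 \<le> u" "0 \<le> v" "u + v = 1" for x y u v
  proof -
    define z where "z = u *\<^sub>R x + v *\<^sub>R y"
    have z: "z \<in> ?O"
      using convex_strictly_positive_orthant_cart x y uv unfolding z_def convex_def by blast
    have ratio: "?g q = ?g z * (\<Prod>i\<in>UNIV. (q $ i / z $ i) powr w i)" if "q \<in> ?O" for q
      using that z by (simp add: powr_divide prod_dividef) (metis less_irrefl)
    have ratio_le: "(\<Prod>i\<in>UNIV. (q $ i / z $ i) powr w i)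
        \<le> (\<Sum>i\<in>UNIV. w i * (q $ i / z $ i)) + (1 - sum w UNIV)" if "q \<in> ?O" for q
      using that z w W by (intro prod_powr_le_weighted_sum) auto
    have "u * ?g x + v * ?g y
        = ?g z * (u * (\<Prod>i\<in>UNIV. (x $ i / z $ i) powr w i) + v * (\<Prod>i\<in>UNIV. (y $ i / z $ i) powr w i))"
      by (simp add: ratio[OF x] ratio[OF y] algebra_simps)
    also have "\<dots> \<le> ?g z * (u * ((\<Sum>i\<in>UNIV. w i * (x $ i / z $ i)) + (1 - sum w UNIV))
                 + v * ((\<Sum>i\<in>UNIV. w i * (y $ i / z $ i)) + (1 - sum w UNIV)))"
      using uv by (intro mult_left_mono add_mono ratio_le x y prod_nonneg) auto
    also have "u * ((\<Sum>i\<in>UNIV. w i * (x $ i / z $ i)) + (1 - sum w UNIV))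
        + v * ((\<Sum>i\<in>UNIV. w i * (y $ i / z $ i)) + (1 - sum w UNIV)) = 1"
    proof -
      have "u * (\<Sum>i\<in>UNIV. w i * (x $ i / z $ i)) + v * (\<Sum>i\<in>UNIV. w i * (y $ i / z $ i))
          = (\<Sum>i\<in>UNIV. w i * ((u * x $ i + v * y $ i) / z $ i))"
        by (simp add: sum_distrib_left sum.distrib[symmetric] algebra_simps add_divide_distrib)
      also have "\<dots> = sum w UNIV"
        using z by (intro sum.cong) (auto simp: z_def less_imp_neq[symmetric])
      finally show ?thesis
        using uv(3) by (simp add: distrib_left eq_diff_eq[symmetric]) (simp add: algebra_simps)
    qed
    finally show ?thesis
      by (simp add: z_def)
  qed
  then show ?thesis
    unfolding concave_on_iff using convex_strictly_positive_orthant_cart by blast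
qed

lemma concave_on_Inf_attained:
  fixes f :: "'p \<Rightarrow> 'a::real_vector \<Rightarrow> real"
  assumes "convex S" and conc: "\<And>p. p \<in> P \<Longrightarrow> concave_on S (f p)"
    and attained: "\<And>x. x \<in> S \<Longrightarrow> \<exists>p\<in>P. \<forall>q\<in>P. f p x \<le> f q x"
  shows "concave_on S (\<lambda>x. Inf ((\<lambda>p. f p x) ` P))"
  unfolding concave_on_iff
proof (intro conjI \<open>convex S\<close> ballI allI impI)
  have Inf_eq: "Inf ((\<lambda>p. f p x) ` P) = f p x" if "p \<in> P" "\<forall>q\<in>P. f p x \<le> f q x" for p x
    using that by (intro cInf_eq_minimum) auto
  fix x y and u v :: real
  assume x: "x \<in> S" and y: "y \<in> S" and uv: "0 \<le> u" "0 \<le> v" "u + v = 1"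
  have z: "u *\<^sub>R x + v *\<^sub>R y \<in> S"
    using \<open>convex S\<close> x y uv by (simp add: convex_def)
  obtain px where px: "px \<in> P" "\<forall>q\<in>P. f px x \<le> f q x" using attained[OF x] by blast
  obtain py where py: "py \<in> P" "\<forall>q\<in>P. f py y \<le> f q y" using attained[OF y] by blast
  obtain pz where pz: "pz \<in> P" "\<forall>q\<in>P. f pz (u *\<^sub>R x + v *\<^sub>R y) \<le> f q (u *\<^sub>R x + v *\<^sub>R y)"
    using attained[OF z] by blast
  have "u * f px x + v * f py y \<le> u * f pz x + v * f pz y"
    using px py pz(1) uv by (intro add_mono mult_left_mono) auto
  also have "\<dots> \<le> f pz (u *\<^sub>R x + v *\<^sub>R y)"
    using conc[OF pz(1)] x y uv by (simp add: concave_on_iff)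
  finally show "u * Inf ((\<lambda>p. f p x) ` P) + v * Inf ((\<lambda>p. f p y) ` P)
      \<le> Inf ((\<lambda>p. f p (u *\<^sub>R x + v *\<^sub>R y)) ` P)"
    using Inf_eq[OF px] Inf_eq[OF py] Inf_eq[OF pz] by simp
qed

lemma concave_on_nonneg_combination:
  assumes "finite A" "convex S" "\<And>a. a \<in> A \<Longrightarrow> 0 \<le> c a"
    and "\<And>a. a \<in> A \<Longrightarrow> concave_on S (g a)"
  shows "concave_on S (\<lambda>x. \<Sum>a\<in>A. c a * g a x)"
  using assms by (induction A rule: finite_induct) (auto simp: concave_on_const intro!: concave_on_add)

theorem lemma3:
  fixes lam b :: real
    and r \<nu> :: "'s::finite \<Rightarrow> 'a::finite \<Rightarrow> real"
    and U :: "'s \<Rightarrow> 'a \<Rightarrow> ('s \<Rightarrow> real) set"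
  assumes "0 < lam" "lam < 1" "0 < b"
    and "\<And>s. \<nu> s \<in> prob_simplex"
    and "\<And>s a. U s a \<subseteq> prob_simplex" "\<And>s a. U s a \<noteq> {}"
    and "\<And>s a x. (\<forall>i. 0 < x $ i) \<Longrightarrow>
           \<exists>p\<in>U s a. \<forall>q\<in>U s a.
             (\<Prod>s'\<in>UNIV. (x $ s') powr (lam * p s')) \<le> (\<Prod>s'\<in>UNIV. (x $ s') powr (lam * q s'))"
  shows "concave_on {x. \<forall>i. 0 < x $ i} (\<lambda>x. t_tilde lam b r \<nu> U x s)"
proof -
  let ?O = "{x::real^'s. \<forall>i. 0 < x $ i}"
  let ?geo = "\<lambda>p x. \<Prod>s'\<in>UNIV. (x $ s') powr (lam * p s')"
  have geo_concave: "concave_on ?O (?geo p)" if "p \<in> U s a" for p a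
  proof -
    have p: "p \<in> prob_simplex"
      using assms(5) that by blast
    then have "(\<Sum>i\<in>UNIV. lam * p i) = lam"
      by (simp add: prob_simplex_def flip: sum_distrib_left)
    then show ?thesis
      using p assms(1,2) by (intro concave_on_prod_powr_cart) (auto simp: prob_simplex_def)
  qed
  have min_concave: "concave_on ?O (\<lambda>x. Inf ((\<lambda>p. ?geo p x) ` U s a))" for a
    using geo_concave assms(7)
    by (intro concave_on_Inf_attained convex_strictly_positive_orthant_cart) auto
  have "concave_on ?O (\<lambda>x. \<Sum>a\<in>UNIV. \<nu> s a * exp (b * r s a) * Inf ((\<lambda>p. ?geo p x) ` U s a))"
    using assms(4) min_concave
    by (intro concave_on_nonneg_combination convex_strictly_positive_orthant_cart)
      (auto simp: prob_simplex_def)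
  then show ?thesis
    unfolding t_tilde_def .
qed

end
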